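(* Consider the online two-timescale algorithm described in the context, run by every device $n\in\{1,\dots,N\}$ with control parameter $V>0$ and initial queues $Q_n^0=0$. Assume there exist $\delta>0$ and a feasible policy for the original problem such that $\frac1T\mathbb{E}\{\sum_{t\in\mathcal{T}_k}E_n^t\}<\overline{E}_n-\delta$ for all frames $k$ and all $n$. Then $$\lim_{K\to\infty}\frac{1}{KN}\sum_{k=0}^{K-1}\sum_{n=1}^N\mathbb{E}\{Q_n^{kT,*}\}\le\frac{\beta_{2,\mathrm{av}}+VX_{\max,\mathrm{av}}}{\delta},$$ and $$\lim_{K\to\infty}\frac{1}{KTN}\sum_{k=0}^{K-1}\sum_{n=1}^N\sum_{t\in\mathcal{T}_k}\mathbb{E}\{X_n^{t,*}\}\le\frac{\beta_{2,\mathrm{av}}}{V}+X_{\mathrm{av}}^{\mathrm{opt}},$$ where $\beta_{2,\mathrm{av}}=\frac1N\sum_n\beta_{2,n}$, $X_{\max,\mathrm{av}}=\frac1N\sum_nX_{n,\max}$ and $X_{\mathrm{av}}^{\mathrm{opt}}=\frac1N\sum_nX_n^{\mathrm{opt}}$.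
   Context: $N$ devices; slots $t=0,1,\dots$ grouped into frames $\mathcal{T}_k=\{kT,\dots,(k+1)T-1\}$. Device $n$ chooses a freezing percentage $\gamma_n^k\in[0,1]$ per frame and a transmit power $p_n^t\in[0,\overline{P}_n]$ per slot; these determine its per-slot energy $E_n^t\in[0,E_{n,\max}]$ (computation plus communication) and success indicator $\mathbb{1}_n^t\in\{0,1\}$ (depending also on the random channel). The penalty is $X_n^t=\lambda\mathbb{1}_n^tB_n(\gamma_n^k-1)$ ($\lambda>0$, data size $B_n$), and $X_{n,\max}=\lambda B_n$. $\overline{E}_n$ is device $n$'s average energy budget. The per-device problem is to minimize $\lim_{K\to\infty}\frac1{KT}\sum_{k<K}\sum_{t\in\mathcal{T}_k}\mathbb{E}\{X_n^t\}$ subject to $\lim_{K\to\infty}\frac1{KT}\sum_{k<K}\sum_{t\in\mathcal{T}_k}\mathbb{E}\{E_n^t\}\le\overline{E}_n$, $0\le\gamma_n^k\le1$, $0\le p_n^t\le\overline{P}_n$; $X_n^{\mathrm{opt}}$ is its optimal value. Virtual queue: $Q_n^{t+1}=\max\{Q_n^t+E_n^t-\overline{E}_n,0\}$. Algorithm: at the start of each frame $k$, given $Q_n^{kT}$, device $n$ chooses $\gamma_n^k$ and its per-slot powers (per-slot powers may depend on the observed channels) to minimize $\mathbb{E}\{\sum_{t\in\mathcal{T}_k}VX_n^t+Q_n^{kT}(E_n^t-\overline{E}_n)\mid Q_n^{kT}\}$, and updates the queue every slot. Superscript $*$ denotes quantities generated by this algorithm. Constants: $\beta_{1,n}=\frac12(E_{n,\max}^2+\overline{E}_n^2)$,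 $\beta_{2,n}=\beta_{1,n}+\frac{(T-1)[(E_{n,\max}-\overline{E}_n)E_{n,\max}+\overline{E}_n^2]}{2}$. Expectations are over channel randomness. *)

theory Defs
  imports "HOL-Probability.Probability"
begin

text \<open>Channel states have type 'h and are i.i.d. over slots with
  law D; the channel sequence lives on the infinite product space chanM D.
  En g p h : per-slot energy (freezing percentage g, power p, channel h);
  Su g p h : success indicator.\<close>

definition chanM :: "'h measure \<Rightarrow> (nat \<Rightarrow> 'h) measure" where
  "chanM D = PiM UNIV (\<lambda>_. D)"

definition penalty :: "real \<Rightarrow> real \<Rightarrow> bool \<Rightarrow> real \<Rightarrow> real" where
  "penalty lam B s g = lam * (if s then 1 else 0) * B * (g - 1)"

text \<open>A per-frame decision of the online algorithm: a freezing percentage and, for each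
  slot offset j < T of the frame, a power as function of the observed channel.\<close>
type_synonym 'h decision = "real \<times> (nat \<Rightarrow> 'h \<Rightarrow> real)"

definition adm_decision ::
  "nat \<Rightarrow> real \<Rightarrow> 'h measure \<Rightarrow> (real \<Rightarrow> real \<Rightarrow> 'h \<Rightarrow> real) \<Rightarrow> (real \<Rightarrow> real \<Rightarrow> 'h \<Rightarrow> bool)
   \<Rightarrow> 'h decision \<Rightarrow> bool" where
  "adm_decision T Pb D En Su d \<longleftrightarrow>
     0 \<le> fst d \<and> fst d \<le> 1 \<and>
     (\<forall>j<T. (\<forall>h\<in>space D. 0 \<le> snd d j h \<and> snd d j h \<le> Pb) \<and>
            (\<lambda>h. En (fst d) (snd d j h) h) \<in> borel_measurable D \<and>
            (\<lambda>h. (if Su (fst d) (snd d j h) h then 1 else 0) :: real) \<in> borel_measurable D)"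

text \<open>Frame objective E{ sum_{t in frame} V X^t + q (E^t - Ebar) | Q^{kT} = q }
  (channels i.i.d., so the conditional expectation is an integral over D per slot).\<close>
definition frame_obj ::
  "nat \<Rightarrow> real \<Rightarrow> real \<Rightarrow> real \<Rightarrow> real \<Rightarrow> 'h measure \<Rightarrow> (real \<Rightarrow> real \<Rightarrow> 'h \<Rightarrow> real)
   \<Rightarrow> (real \<Rightarrow> real \<Rightarrow> 'h \<Rightarrow> bool) \<Rightarrow> real \<Rightarrow> 'h decision \<Rightarrow> real" where
  "frame_obj T V lam B Eb D En Su q d =
     (\<Sum>j<T. \<integral>h. V * penalty lam B (Su (fst d) (snd d j h) h) (fst d)
                 + q * (En (fst d) (snd d j h) h - Eb) \<partial>D)"

text \<open>alg k q is the decision taken at the start of frame k when Q^{kT} = q; it must be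
  a minimiser of the frame objective over all admissible decisions.\<close>
definition is_dpp_alg ::
  "nat \<Rightarrow> real \<Rightarrow> real \<Rightarrow> real \<Rightarrow> real \<Rightarrow> real \<Rightarrow> 'h measure \<Rightarrow> (real \<Rightarrow> real \<Rightarrow> 'h \<Rightarrow> real)
   \<Rightarrow> (real \<Rightarrow> real \<Rightarrow> 'h \<Rightarrow> bool) \<Rightarrow> (nat \<Rightarrow> real \<Rightarrow> 'h decision) \<Rightarrow> bool" where
  "is_dpp_alg T Pb V lam B Eb D En Su alg \<longleftrightarrow>
     (\<forall>k q. 0 \<le> q \<longrightarrow> adm_decision T Pb D En Su (alg k q) \<and>
        (\<forall>d. adm_decision T Pb D En Su d \<longrightarrow>
             frame_obj T V lam B Eb D En Su q (alg k q) \<le> frame_obj T V lam B Eb D En Su q d))"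

definition alg_measurable ::
  "nat \<Rightarrow> 'h measure \<Rightarrow> (real \<Rightarrow> real \<Rightarrow> 'h \<Rightarrow> real) \<Rightarrow> (real \<Rightarrow> real \<Rightarrow> 'h \<Rightarrow> bool)
   \<Rightarrow> (nat \<Rightarrow> real \<Rightarrow> 'h decision) \<Rightarrow> bool" where
  "alg_measurable T D En Su alg \<longleftrightarrow>
     (\<forall>k. (\<lambda>q. fst (alg k q)) \<in> borel_measurable borel) \<and>
     (\<forall>k j. j < T \<longrightarrow>
        (\<lambda>(q, h). En (fst (alg k q)) (snd (alg k q) j h) h) \<in> borel_measurable (borel \<Otimes>\<^sub>M D) \<and>
        (\<lambda>(q, h). (if Su (fst (alg k q)) (snd (alg k q) j h) h then 1 else 0) :: real)
            \<in> borel_measurable (borel \<Otimes>\<^sub>M D))"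

text \<open>Trajectory of the algorithm: pair (Q^t, Q^{kT}) where k = t div T is the frame of t.
  Q^0 = 0 and Q^{t+1} = max (Q^t + E^t - Ebar) 0.\<close>
fun alg_state ::
  "nat \<Rightarrow> real \<Rightarrow> (real \<Rightarrow> real \<Rightarrow> 'h \<Rightarrow> real) \<Rightarrow> (nat \<Rightarrow> real \<Rightarrow> 'h decision)
   \<Rightarrow> nat \<Rightarrow> (nat \<Rightarrow> 'h) \<Rightarrow> real \<times> real" where
  "alg_state T Eb En alg 0 \<omega> = (0, 0)"
| "alg_state T Eb En alg (Suc t) \<omega> =
     (let q = fst (alg_state T Eb En alg t \<omega>);
          qf = snd (alg_state T Eb En alg t \<omega>);
          d = alg (t div T) qf;
          q' = max (q + En (fst d) (snd d (t mod T) (\<omega> t)) (\<omega> t) - Eb) 0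
      in (q', if Suc t mod T = 0 then q' else qf))"

definition alg_Q where
  "alg_Q T Eb En alg t \<omega> = fst (alg_state T Eb En alg t \<omega>)"

definition alg_X ::
  "nat \<Rightarrow> real \<Rightarrow> (real \<Rightarrow> real \<Rightarrow> 'h \<Rightarrow> real) \<Rightarrow> (real \<Rightarrow> real \<Rightarrow> 'h \<Rightarrow> bool) \<Rightarrow> real \<Rightarrow> real
   \<Rightarrow> (nat \<Rightarrow> real \<Rightarrow> 'h decision) \<Rightarrow> nat \<Rightarrow> (nat \<Rightarrow> 'h) \<Rightarrow> real" where
  "alg_X T Eb En Su lam B alg t \<omega> =
     (let d = alg (t div T) (snd (alg_state T Eb En alg t \<omega>))
      in penalty lam B (Su (fst d) (snd d (t mod T) (\<omega> t)) (\<omega> t)) (fst d))"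

text \<open>General (causal, deterministic) policies of the original problem:
  fst pol k \<omega> = gamma^k (depends on channels of slots < kT),
  snd pol t \<omega> = p^t (depends on channels of slots \<le> t).\<close>
type_synonym 'h policy = "(nat \<Rightarrow> (nat \<Rightarrow> 'h) \<Rightarrow> real) \<times> (nat \<Rightarrow> (nat \<Rightarrow> 'h) \<Rightarrow> real)"

definition pol_E :: "nat \<Rightarrow> (real \<Rightarrow> real \<Rightarrow> 'h \<Rightarrow> real) \<Rightarrow> 'h policy \<Rightarrow> nat \<Rightarrow> (nat \<Rightarrow> 'h) \<Rightarrow> real" where
  "pol_E T En pol t \<omega> = En (fst pol (t div T) \<omega>) (snd pol t \<omega>) (\<omega> t)"

definition pol_S :: "nat \<Rightarrow> (real \<Rightarrow> real \<Rightarrow> 'h \<Rightarrow> bool) \<Rightarrow> 'h policy \<Rightarrow> nat \<Rightarrow> (nat \<Rightarrow> 'h) \<Rightarrow> bool" where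
  "pol_S T Su pol t \<omega> = Su (fst pol (t div T) \<omega>) (snd pol t \<omega>) (\<omega> t)"

definition pol_X ::
  "nat \<Rightarrow> (real \<Rightarrow> real \<Rightarrow> 'h \<Rightarrow> bool) \<Rightarrow> real \<Rightarrow> real \<Rightarrow> 'h policy \<Rightarrow> nat \<Rightarrow> (nat \<Rightarrow> 'h) \<Rightarrow> real" where
  "pol_X T Su lam B pol t \<omega> = penalty lam B (pol_S T Su pol t \<omega>) (fst pol (t div T) \<omega>)"

definition adm_policy ::
  "nat \<Rightarrow> real \<Rightarrow> 'h measure \<Rightarrow> (real \<Rightarrow> real \<Rightarrow> 'h \<Rightarrow> real) \<Rightarrow> (real \<Rightarrow> real \<Rightarrow> 'h \<Rightarrow> bool)
   \<Rightarrow> 'h policy \<Rightarrow> bool" where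
  "adm_policy T Pb D En Su pol \<longleftrightarrow>
     (\<forall>k \<omega> \<omega>'. (\<forall>s<k * T. \<omega> s = \<omega>' s) \<longrightarrow> fst pol k \<omega> = fst pol k \<omega>') \<and>
     (\<forall>t \<omega> \<omega>'. (\<forall>s\<le>t. \<omega> s = \<omega>' s) \<longrightarrow> snd pol t \<omega> = snd pol t \<omega>') \<and>
     (\<forall>k \<omega>. 0 \<le> fst pol k \<omega> \<and> fst pol k \<omega> \<le> 1) \<and>
     (\<forall>t \<omega>. 0 \<le> snd pol t \<omega> \<and> snd pol t \<omega> \<le> Pb) \<and>
     (\<forall>k. fst pol k \<in> borel_measurable (chanM D)) \<and>
     (\<forall>t. pol_E T En pol t \<in> borel_measurable (chanM D) \<and>
          (\<lambda>\<omega>. (if pol_S T Su pol t \<omega> then 1 else 0) :: real) \<in> borel_measurable (chanM D))"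

definition avg_E where
  "avg_E T D En pol K = 1 / (real K * real T) * (\<Sum>t<K * T. \<integral>\<omega>. pol_E T En pol t \<omega> \<partial>chanM D)"

definition avg_X where
  "avg_X T D Su lam B pol K = 1 / (real K * real T) * (\<Sum>t<K * T. \<integral>\<omega>. pol_X T Su lam B pol t \<omega> \<partial>chanM D)"

definition feasible_policy where
  "feasible_policy T Pb D En Su Eb pol \<longleftrightarrow>
     adm_policy T Pb D En Su pol \<and> limsup (\<lambda>K. ereal (avg_E T D En pol K)) \<le> ereal Eb"

definition X_opt where
  "X_opt T Pb D En Su Eb lam B =
     real_of_ereal (INF pol \<in> {pol. feasible_policy T Pb D En Su Eb pol}.
                      limsup (\<lambda>K. ereal (avg_X T D Su lam B pol K)))"

definition beta1 :: "real \<Rightarrow> real \<Rightarrow> real" where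
  "beta1 Emax Eb = (Emax\<^sup>2 + Eb\<^sup>2) / 2"

definition beta2 :: "nat \<Rightarrow> real \<Rightarrow> real \<Rightarrow> real" where
  "beta2 T Emax Eb = beta1 Emax Eb + (real T - 1) * ((Emax - Eb) * Emax + Eb\<^sup>2) / 2"

end

theory Submission
  imports Defs
begin

text \<open>Drift-plus-penalty with the Lyapunov function L = Q^2 / 2, one frame at a time. The queue
  recursion alone gives L(Q^{(k+1)T}) - L(Q^{kT}) \<le> T \<beta>2 + Q^{kT} \<Sum>t (E^t - Ebar) over a frame.
  Adding V times the frame penalty and taking expectations, the right-hand side becomes the
  expected frame objective at Q^{kT}: the channel of slot t is independent of everything the
  algorithm knew at the start of the frame, so it may be resampled. The algorithm minimises
  that objective, so it is at most the value of any causal policy frozen outside the current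
  slot; the Slater policy bounds it by -Q^{kT} T \<delta>, and averaging a feasible policy over many
  frames bounds it by T V X^opt. Summing over frames the drift telescopes (L starts at 0 and
  stays nonnegative), which yields both bounds for every device; averaging over the devices
  gives the theorem.\<close>

lemma space_chanM: "\<omega> \<in> space (chanM D) \<longleftrightarrow> (\<forall>i. \<omega> i \<in> space D)"
  by (auto simp: chanM_def space_PiM)

lemma prob_space_chanM: "prob_space D \<Longrightarrow> prob_space (chanM D)"
  unfolding chanM_def by (rule prob_space_PiM)

lemma measurable_component_chanM: "(\<lambda>\<omega>. \<omega> i) \<in> measurable (chanM D) D"
  unfolding chanM_def by (rule measurable_component_singleton) simp

lemma
  fixes f :: "(nat \<Rightarrow> 'h) \<Rightarrow> real"
  assumes D: "prob_space D" and f[measurable]: "f \<in> borel_measurable (chanM D)"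
    and bounded: "\<And>\<omega>. \<omega> \<in> space (chanM D) \<Longrightarrow> \<bar>f \<omega>\<bar> \<le> c"
  shows integrable_resample_chanM: "integrable (chanM D) (\<lambda>\<omega>. \<integral>h. f (\<omega> (i := h)) \<partial>D)"
    and integral_resample_chanM: "(\<integral>\<omega>. (\<integral>h. f (\<omega> (i := h)) \<partial>D) \<partial>chanM D) = (\<integral>\<omega>. f \<omega> \<partial>chanM D)"
proof -
  interpret pair_prob_space D "chanM D"
    by (simp add: D pair_prob_space_def pair_sigma_finite_def prob_space_chanM prob_space_imp_sigma_finite)
  have upd: "(\<lambda>(h, \<omega>). \<omega> (i := h)) \<in> measurable (D \<Otimes>\<^sub>M chanM D) (chanM D)"
  proof -
    have "(\<lambda>x. (snd x) (i := fst x)) \<in> measurable (D \<Otimes>\<^sub>M chanM D) (chanM D)"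
      unfolding chanM_def by (rule measurable_fun_upd[where J = UNIV]) auto
    then show ?thesis
      by (simp add: case_prod_beta')
  qed
  have int: "integrable (D \<Otimes>\<^sub>M chanM D) (\<lambda>(h, \<omega>). f (\<omega> (i := h)))"
    using upd by (intro P.integrable_const_bound[where B = c])
      (auto simp: space_pair_measure space_chanM intro!: bounded)
  show "integrable (chanM D) (\<lambda>\<omega>. \<integral>h. f (\<omega> (i := h)) \<partial>D)"
    using integrable_snd[of "\<lambda>h \<omega>. f (\<omega> (i := h))"] int by simp
  have "(\<integral>\<omega>. (\<integral>h. f (\<omega> (i := h)) \<partial>D) \<partial>chanM D) = (\<integral>(h, \<omega>). f (\<omega> (i := h)) \<partial>(D \<Otimes>\<^sub>M chanM D))"
    using integral_snd[of "\<lambda>h \<omega>. f (\<omega> (i := h))"] int by simp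
  also have "\<dots> = (\<integral>\<omega>. f \<omega> \<partial>distr (D \<Otimes>\<^sub>M chanM D) (chanM D) (\<lambda>(h, \<omega>). \<omega> (i := h)))"
    using upd by (simp add: integral_distr case_prod_beta')
  also have "\<dots> = (\<integral>\<omega>. f \<omega> \<partial>chanM D)"
    using distr_pair_PiM_eq_PiM[of UNIV "\<lambda>_. D" i] D by (simp add: chanM_def)
  finally show "(\<integral>\<omega>. (\<integral>h. f (\<omega> (i := h)) \<partial>D) \<partial>chanM D) = (\<integral>\<omega>. f \<omega> \<partial>chanM D)" .
qed

lemma queue_increment_bounds:
  fixes q e :: "nat \<Rightarrow> real"
  assumes step: "\<And>j. j < m \<Longrightarrow> q (Suc j) = max (q j + e j - Eb) 0"
    and e: "\<And>j. j < m \<Longrightarrow> 0 \<le> e j \<and> e j \<le> Emax"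
    and q0: "0 \<le> q 0" and Eb: "Eb \<le> Emax"
  shows "- (real m * Eb) \<le> q m - q 0 \<and> q m - q 0 \<le> real m * (Emax - Eb)"
  using step e
proof (induction m)
  case 0
  then show ?case by simp
next
  case (Suc m)
  have IH: "- (real m * Eb) \<le> q m - q 0 \<and> q m - q 0 \<le> real m * (Emax - Eb)"
    using Suc by simp
  have "0 \<le> q m"
    using q0 Suc.prems(1) by (cases m) auto
  then show ?case
    using IH Suc.prems[of m] Eb by (auto simp: algebra_simps max_def)
qed

lemma queue_cross_term_le:
  fixes q e :: "nat \<Rightarrow> real"
  assumes step: "\<And>j. j < m \<Longrightarrow> q (Suc j) = max (q j + e j - Eb) 0"
    and e: "\<And>j. j < m \<Longrightarrow> 0 \<le> e j \<and> e j \<le> Emax"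
    and q0: "0 \<le> q 0" and Eb: "0 \<le> Eb" "Eb \<le> Emax"
    and x: "0 \<le> x" "x \<le> Emax"
  shows "(q m - q 0) * (x - Eb) \<le> real m * ((Emax - Eb) * Emax + Eb\<^sup>2)"
proof -
  define d where "d = q m - q 0"
  define cc where "cc = (Emax - Eb) * Emax + Eb\<^sup>2"
  have "cc - (Emax - Eb) * (Emax - Eb) = Emax * Eb" and "cc - Eb * Eb = (Emax - Eb) * Emax"
    by (simp_all add: cc_def algebra_simps power2_eq_square)
  then have cc: "(Emax - Eb) * (Emax - Eb) \<le> cc" "Eb * Eb \<le> cc"
    using Eb by (smt (verit) mult_nonneg_nonneg)+
  have d: "- (real m * Eb) \<le> d" "d \<le> real m * (Emax - Eb)"
    using queue_increment_bounds[OF step e q0 Eb(2)] by (auto simp: d_def)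
  show ?thesis
  proof (cases "0 \<le> d")
    case True
    have "d * (x - Eb) \<le> d * (Emax - Eb)"
      using True x by (intro mult_left_mono) auto
    also have "\<dots> \<le> (real m * (Emax - Eb)) * (Emax - Eb)"
      using d Eb by (intro mult_right_mono) auto
    also have "\<dots> \<le> real m * cc"
      using cc by (simp add: mult.assoc mult_left_mono)
    finally show ?thesis by (simp add: d_def cc_def)
  next
    case False
    have "d * (x - Eb) = (- d) * (Eb - x)" by (simp add: algebra_simps)
    also have "\<dots> \<le> (- d) * Eb"
      using False x by (intro mult_left_mono) auto
    also have "\<dots> \<le> (real m * Eb) * Eb"
      using d Eb by (intro mult_right_mono) auto
    also have "\<dots> \<le> real m * cc"
      using cc by (simp add: mult.assoc mult_left_mono)
    finally show ?thesis by (simp add: d_def cc_def)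
  qed
qed

lemma queue_drift_le:
  fixes q e :: "nat \<Rightarrow> real"
  assumes step: "\<And>j. j < m \<Longrightarrow> q (Suc j) = max (q j + e j - Eb) 0"
    and e: "\<And>j. j < m \<Longrightarrow> 0 \<le> e j \<and> e j \<le> Emax"
    and q0: "0 \<le> q 0" and Eb: "0 \<le> Eb" "Eb \<le> Emax"
  shows "(q m)\<^sup>2 / 2 - (q 0)\<^sup>2 / 2 \<le> real m * beta2 m Emax Eb + q 0 * (\<Sum>j<m. e j - Eb)"
  using step e
proof (induction m)
  case 0
  then show ?case by simp
next
  case (Suc m)
  define a where "a = q m + e m - Eb"
  have e_m: "0 \<le> e m" "e m \<le> Emax"
    using Suc.prems(2) by auto
  have a2: "a\<^sup>2 / 2 = (q m)\<^sup>2 / 2 + q 0 * (e m - Eb) + (q m - q 0) * (e m - Eb) + (e m - Eb)\<^sup>2 / 2"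
    by (simp add: a_def power2_eq_square field_simps)
  have cross: "(q m - q 0) * (e m - Eb) \<le> real m * ((Emax - Eb) * Emax + Eb\<^sup>2)"
    using Suc.prems e_m q0 Eb by (intro queue_cross_term_le[where q = q and e = e]) auto
  have square: "(e m - Eb)\<^sup>2 \<le> Emax\<^sup>2 + Eb\<^sup>2"
  proof -
    have "(e m - Eb)\<^sup>2 = (e m)\<^sup>2 + Eb\<^sup>2 - 2 * (e m * Eb)"
      by (simp add: power2_eq_square algebra_simps)
    moreover have "(e m)\<^sup>2 \<le> Emax\<^sup>2"
      using e_m by (simp add: power_mono)
    moreover have "0 \<le> e m * Eb"
      using e_m Eb by simp
    ultimately show ?thesis
      by linarith
  qed
  have "(q (Suc m))\<^sup>2 / 2 - (q 0)\<^sup>2 / 2 \<le> a\<^sup>2 / 2 - (q 0)\<^sup>2 / 2"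
    using Suc.prems(1)[of m] by (simp add: a_def max_def)
  also have "\<dots> \<le> ((q m)\<^sup>2 / 2 - (q 0)\<^sup>2 / 2) + q 0 * (e m - Eb)
      + real m * ((Emax - Eb) * Emax + Eb\<^sup>2) + (Emax\<^sup>2 + Eb\<^sup>2) / 2"
    using a2 cross square by argo
  also have "\<dots> \<le> real m * beta2 m Emax Eb + q 0 * (\<Sum>j<m. e j - Eb) + q 0 * (e m - Eb)
      + real m * ((Emax - Eb) * Emax + Eb\<^sup>2) + (Emax\<^sup>2 + Eb\<^sup>2) / 2"
    using Suc by simp
  also have "\<dots> = real (Suc m) * beta2 (Suc m) Emax Eb + q 0 * (\<Sum>j<Suc m. e j - Eb)"
    by (simp add: beta2_def beta1_def distrib_left field_simps)
  finally show ?case .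
qed

lemma sum_le_of_drift_le:
  fixes L y :: "nat \<Rightarrow> real"
  assumes drift: "\<And>k. L (Suc k) - L k + y k \<le> c" and "L 0 = 0" and "0 \<le> L K"
  shows "(\<Sum>k<K. y k) \<le> real K * c"
proof -
  have "(\<Sum>k<K. y k) + (L K - L 0) = (\<Sum>k<K. L (Suc k) - L k + y k)"
    by (simp add: sum.distrib sum_lessThan_telescope)
  also have "\<dots> \<le> real K * c"
    using sum_mono[of "{..<K}", OF drift] by simp
  finally show ?thesis
    using assms(2,3) by simp
qed

lemma sum_frame: "(\<Sum>t\<in>{k * T..<Suc k * T}. f t) = (\<Sum>j<T. f (k * T + j))"
  by (simp add: sum.atLeastLessThan_shift_0 atLeast0LessThan)

lemma sum_frames:
  fixes f :: "nat \<Rightarrow> 'a::comm_monoid_add"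
  shows "(\<Sum>k<K. \<Sum>j<T. f (k * T + j)) = (\<Sum>t<K * T. f t)"
  using sum.nat_group[of f T K] by (simp add: sum.atLeastLessThan_shift_0 atLeast0LessThan comp_def)

lemma beta2_nonneg:
  assumes "1 \<le> m"
  shows "0 \<le> beta2 m Emax Eb"
proof -
  have "(Emax - Eb) * Emax + Eb\<^sup>2 = ((Emax - Eb)\<^sup>2 + Emax\<^sup>2 + Eb\<^sup>2) / 2"
    by (simp add: power2_eq_square field_simps)
  moreover have "0 \<le> ((Emax - Eb)\<^sup>2 + Emax\<^sup>2 + Eb\<^sup>2) / 2"
    by simp
  ultimately have "0 \<le> (Emax - Eb) * Emax + Eb\<^sup>2"
    by linarith
  then show ?thesis
    using assms by (simp add: beta2_def beta1_def)
qed

lemma penalty_bounds: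
  assumes "0 \<le> lam * B" "0 \<le> g" "g \<le> 1"
  shows "- (lam * B) \<le> penalty lam B s g \<and> penalty lam B s g \<le> 0"
proof -
  have "0 \<le> lam * B * g" and "lam * B * g \<le> lam * B"
    using assms by (simp_all add: mult_left_le)
  then show ?thesis
    by (auto simp: penalty_def algebra_simps)
qed

text \<open>The decision of a causal policy in frame k when the channels of all slots other than the
  current one are frozen at \<omega>; on \<omega> (t := h), with t the current slot, the policy acts exactly
  like this decision.\<close>

definition frozen_decision :: "nat \<Rightarrow> 'h policy \<Rightarrow> nat \<Rightarrow> (nat \<Rightarrow> 'h) \<Rightarrow> 'h decision" where
  "frozen_decision T pol k \<omega> = (fst pol k \<omega>, \<lambda>j h. snd pol (k * T + j) (\<omega> (k * T + j := h)))"

locale dpp_device =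
  fixes T :: nat and V lam :: real and D :: "'h measure"
    and En :: "real \<Rightarrow> real \<Rightarrow> 'h \<Rightarrow> real" and Su :: "real \<Rightarrow> real \<Rightarrow> 'h \<Rightarrow> bool"
    and B Pb Emax Eb :: real and alg :: "nat \<Rightarrow> real \<Rightarrow> 'h decision"
  assumes T: "T \<ge> 1" and V: "V > 0" and lam: "lam > 0"
    and D: "prob_space D" and B: "B > 0" and Pb: "Pb \<ge> 0"
    and En_bound: "\<And>g p h. 0 \<le> g \<Longrightarrow> g \<le> 1 \<Longrightarrow> 0 \<le> p \<Longrightarrow> p \<le> Pb \<Longrightarrow> h \<in> space D \<Longrightarrow>
                     0 \<le> En g p h \<and> En g p h \<le> Emax"
    and Eb: "Eb \<ge> 0"
    and alg: "is_dpp_alg T Pb V lam B Eb D En Su alg"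
    and alg_meas: "alg_measurable T D En Su alg"
begin

abbreviation Q :: "nat \<Rightarrow> (nat \<Rightarrow> 'h) \<Rightarrow> real" where
  "Q \<equiv> alg_Q T Eb En alg"

abbreviation X :: "nat \<Rightarrow> (nat \<Rightarrow> 'h) \<Rightarrow> real" where
  "X \<equiv> alg_X T Eb En Su lam B alg"

definition E_dec :: "nat \<Rightarrow> real \<Rightarrow> nat \<Rightarrow> 'h \<Rightarrow> real" where
  "E_dec k q j h = En (fst (alg k q)) (snd (alg k q) j h) h"

definition X_dec :: "nat \<Rightarrow> real \<Rightarrow> nat \<Rightarrow> 'h \<Rightarrow> real" where
  "X_dec k q j h = penalty lam B (Su (fst (alg k q)) (snd (alg k q) j h) h) (fst (alg k q))"

definition slot_obj :: "nat \<Rightarrow> real \<Rightarrow> nat \<Rightarrow> 'h \<Rightarrow> real" where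
  "slot_obj k q j h = V * X_dec k q j h + q * (E_dec k q j h - Eb)"

lemma frame_start_queue: "snd (alg_state T Eb En alg t \<omega>) = Q (t div T * T) \<omega>"
proof (induction t)
  case 0
  then show ?case by (simp add: alg_Q_def)
next
  case (Suc t)
  show ?case
  proof (cases "Suc t mod T = 0")
    case True
    then have "Suc t div T * T = Suc t"
      by (metis add_0_right div_mult_mod_eq)
    then show ?thesis
      using True by (simp add: alg_Q_def Let_def)
  next
    case False
    then have "Suc t div T = t div T"
      using T by (simp add: div_Suc mod_Suc split: if_splits)
    then show ?thesis
      using False Suc.IH by (simp add: alg_Q_def Let_def)
  qed
qed

lemma Q_0 [simp]: "Q 0 \<omega> = 0"
  by (simp add: alg_Q_def)

lemma Q_Suc: "Q (Suc t) \<omega> = max (Q t \<omega> + E_dec (t div T) (Q (t div T * T) \<omega>) (t mod T) (\<omega> t) - Eb) 0"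
  by (simp add: alg_Q_def E_dec_def Let_def frame_start_queue)

lemma X_eq: "X t \<omega> = X_dec (t div T) (Q (t div T * T) \<omega>) (t mod T) (\<omega> t)"
  by (simp add: alg_X_def X_dec_def Let_def frame_start_queue)

lemma Q_causal:
  assumes "\<And>s. s < t \<Longrightarrow> \<omega> s = \<omega>' s"
  shows "Q t \<omega> = Q t \<omega>'"
proof -
  have "alg_state T Eb En alg t \<omega> = alg_state T Eb En alg t \<omega>'"
    using assms by (induction t) (simp_all add: Let_def)
  then show ?thesis
    by (simp add: alg_Q_def)
qed

lemma Q_nonneg: "0 \<le> Q t \<omega>"
  by (cases t) (simp_all add: Q_Suc)

lemma
  assumes "j < T"
  shows Q_step_in_frame: "Q (k * T + Suc j) \<omega> = max (Q (k * T + j) \<omega> + E_dec k (Q (k * T) \<omega>) j (\<omega> (k * T + j)) - Eb) 0"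
    and X_in_frame: "X (k * T + j) \<omega> = X_dec k (Q (k * T) \<omega>) j (\<omega> (k * T + j))"
  using assms Q_Suc[of "k * T + j" \<omega>] X_eq[of "k * T + j" \<omega>] by simp_all

lemma decision_admissible: "0 \<le> q \<Longrightarrow> adm_decision T Pb D En Su (alg k q)"
  using alg unfolding is_dpp_alg_def by blast

lemma decision_minimal:
  "0 \<le> q \<Longrightarrow> adm_decision T Pb D En Su d \<Longrightarrow>
    frame_obj T V lam B Eb D En Su q (alg k q) \<le> frame_obj T V lam B Eb D En Su q d"
  using alg unfolding is_dpp_alg_def by blast

lemma frame_obj_decision: "frame_obj T V lam B Eb D En Su q (alg k q) = (\<Sum>j<T. \<integral>h. slot_obj k q j h \<partial>D)"
  by (simp add: frame_obj_def slot_obj_def X_dec_def E_dec_def)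

lemma E_dec_bounds: "0 \<le> q \<Longrightarrow> j < T \<Longrightarrow> h \<in> space D \<Longrightarrow> 0 \<le> E_dec k q j h \<and> E_dec k q j h \<le> Emax"
  using decision_admissible[of q k] unfolding adm_decision_def E_dec_def by (intro En_bound) auto

lemma X_dec_bounds: "0 \<le> q \<Longrightarrow> - (lam * B) \<le> X_dec k q j h \<and> X_dec k q j h \<le> 0"
  using decision_admissible[of q k] lam B unfolding adm_decision_def X_dec_def by (intro penalty_bounds) auto

lemma X_bounds: "- (lam * B) \<le> X t \<omega> \<and> X t \<omega> \<le> 0"
  unfolding X_eq by (rule X_dec_bounds[OF Q_nonneg])

lemma Emax_nonneg: "0 \<le> Emax"
proof -
  interpret prob_space D by (rule D)
  obtain h where "h \<in> space D" using not_empty by blast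
  then show ?thesis using En_bound[of 0 0 h] Pb by auto
qed

lemma
  assumes f: "f \<in> borel_measurable (chanM D)" and j: "j < T"
  shows measurable_E_dec: "(\<lambda>\<omega>. E_dec k (f \<omega>) j (\<omega> i)) \<in> borel_measurable (chanM D)"
    and measurable_X_dec: "(\<lambda>\<omega>. X_dec k (f \<omega>) j (\<omega> i)) \<in> borel_measurable (chanM D)"
proof -
  have pair: "(\<lambda>\<omega>. (f \<omega>, \<omega> i)) \<in> measurable (chanM D) (borel \<Otimes>\<^sub>M D)"
    using f measurable_component_chanM by (rule measurable_Pair)
  have "(\<lambda>(q, h). E_dec k q j h) \<in> borel_measurable (borel \<Otimes>\<^sub>M D)"
    using alg_meas j unfolding alg_measurable_def E_dec_def by blast
  from measurable_comp[OF pair this] show "(\<lambda>\<omega>. E_dec k (f \<omega>) j (\<omega> i)) \<in> borel_measurable (chanM D)"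
    by (simp add: o_def)
  have "(\<lambda>(q, h). (if Su (fst (alg k q)) (snd (alg k q) j h) h then 1 else 0) :: real)
      \<in> borel_measurable (borel \<Otimes>\<^sub>M D)"
    using alg_meas j unfolding alg_measurable_def by blast
  from measurable_comp[OF pair this]
  have success[measurable]: "(\<lambda>\<omega>. (if Su (fst (alg k (f \<omega>))) (snd (alg k (f \<omega>)) j (\<omega> i)) (\<omega> i) then 1 else 0) :: real)
      \<in> borel_measurable (chanM D)"
    by (simp add: o_def)
  have "(\<lambda>q. fst (alg k q)) \<in> borel_measurable borel"
    using alg_meas unfolding alg_measurable_def by blast
  from measurable_comp[OF f this] have [measurable]: "(\<lambda>\<omega>. fst (alg k (f \<omega>))) \<in> borel_measurable (chanM D)"
    by (simp add: o_def)
  show "(\<lambda>\<omega>. X_dec k (f \<omega>) j (\<omega> i)) \<in> borel_measurable (chanM D)"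
    unfolding X_dec_def penalty_def by measurable
qed

lemma Q_measurable [measurable]: "Q t \<in> borel_measurable (chanM D)"
proof (induction t rule: less_induct)
  case (less t)
  show ?case
  proof (cases t)
    case (Suc s)
    have [measurable]: "Q s \<in> borel_measurable (chanM D)" "Q (s div T * T) \<in> borel_measurable (chanM D)"
      using less Suc by (auto intro: le_less_trans[OF div_times_less_eq_dividend])
    have "(\<lambda>\<omega>. E_dec (s div T) (Q (s div T * T) \<omega>) (s mod T) (\<omega> s)) \<in> borel_measurable (chanM D)"
      using T by (intro measurable_E_dec) auto
    then show ?thesis
      unfolding Suc Q_Suc by measurable
  qed simp
qed

lemma X_measurable [measurable]: "X t \<in> borel_measurable (chanM D)"
  unfolding X_eq using T by (intro measurable_X_dec) auto

lemma Q_le: "\<omega> \<in> space (chanM D) \<Longrightarrow> Q t \<omega> \<le> real t * Emax"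
proof (induction t)
  case (Suc t)
  have "E_dec (t div T) (Q (t div T * T) \<omega>) (t mod T) (\<omega> t) \<le> Emax"
    using E_dec_bounds[OF Q_nonneg] T Suc.prems by (auto simp: space_chanM)
  then show ?case
    using Suc Emax_nonneg Eb by (simp add: Q_Suc algebra_simps)
qed simp

lemma Q_eq_0_if_Emax_le_Eb: "Emax \<le> Eb \<Longrightarrow> \<omega> \<in> space (chanM D) \<Longrightarrow> Q t \<omega> = 0"
proof (induction t)
  case (Suc t)
  have "E_dec (t div T) (Q (t div T * T) \<omega>) (t mod T) (\<omega> t) \<le> Emax"
    using E_dec_bounds[OF Q_nonneg] T Suc.prems by (auto simp: space_chanM)
  then show ?case
    using Suc by (simp add: Q_Suc)
qed simp

lemma integrable_chanM:
  fixes f :: "(nat \<Rightarrow> 'h) \<Rightarrow> real"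
  assumes "f \<in> borel_measurable (chanM D)" and "\<And>\<omega>. \<omega> \<in> space (chanM D) \<Longrightarrow> \<bar>f \<omega>\<bar> \<le> c"
  shows "integrable (chanM D) f"
proof -
  interpret prob_space "chanM D"
    using D by (rule prob_space_chanM)
  show ?thesis
    by (rule integrable_const_bound[where B = c]) (use assms in auto)
qed

lemma Q_integrable: "integrable (chanM D) (Q t)"
  by (rule integrable_chanM[where c = "real t * Emax"]) (use Q_le Q_nonneg in auto)

lemma Q_square_integrable: "integrable (chanM D) (\<lambda>\<omega>. (Q t \<omega>)\<^sup>2 / 2)"
proof (rule integrable_chanM[where c = "(real t * Emax)\<^sup>2 / 2"])
  fix \<omega> assume "\<omega> \<in> space (chanM D)"
  then have "(Q t \<omega>)\<^sup>2 \<le> (real t * Emax)\<^sup>2"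
    using Q_le Q_nonneg by (intro power_mono) auto
  then show "\<bar>(Q t \<omega>)\<^sup>2 / 2\<bar> \<le> (real t * Emax)\<^sup>2 / 2"
    by simp
qed measurable

lemma X_integrable: "integrable (chanM D) (X t)"
proof (rule integrable_chanM[where c = "lam * B"])
  fix \<omega> show "\<bar>X t \<omega>\<bar> \<le> lam * B"
    using X_bounds[of t \<omega>] by linarith
qed simp

lemma frame_drift_le:
  assumes \<omega>: "\<omega> \<in> space (chanM D)"
  shows "(Q (Suc k * T) \<omega>)\<^sup>2 / 2 - (Q (k * T) \<omega>)\<^sup>2 / 2
    \<le> real T * beta2 T Emax Eb + Q (k * T) \<omega> * (\<Sum>j<T. E_dec k (Q (k * T) \<omega>) j (\<omega> (k * T + j)) - Eb)"
proof (cases "Eb \<le> Emax")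
  case True
  have "(Q (k * T + T) \<omega>)\<^sup>2 / 2 - (Q (k * T + 0) \<omega>)\<^sup>2 / 2
    \<le> real T * beta2 T Emax Eb + Q (k * T + 0) \<omega> * (\<Sum>j<T. E_dec k (Q (k * T) \<omega>) j (\<omega> (k * T + j)) - Eb)"
  proof (rule queue_drift_le[OF _ _ Q_nonneg Eb True])
    fix j assume "j < T"
    then show "Q (k * T + Suc j) \<omega> = max (Q (k * T + j) \<omega> + E_dec k (Q (k * T) \<omega>) j (\<omega> (k * T + j)) - Eb) 0"
      and "0 \<le> E_dec k (Q (k * T) \<omega>) j (\<omega> (k * T + j)) \<and> E_dec k (Q (k * T) \<omega>) j (\<omega> (k * T + j)) \<le> Emax"
      using Q_step_in_frame E_dec_bounds[OF Q_nonneg] \<omega> by (auto simp: space_chanM)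
  qed
  then show ?thesis
    by (simp add: add.commute)
next
  case False
  \<comment> \<open>queue_drift_le fails for a large initial queue here, but this queue never leaves 0.\<close>
  then show ?thesis
    using Q_eq_0_if_Emax_le_Eb[OF _ \<omega>] beta2_nonneg T by simp
qed

lemma
  assumes j: "j < T"
  shows integrable_slot_obj: "integrable (chanM D) (\<lambda>\<omega>. slot_obj k (Q (k * T) \<omega>) j (\<omega> (k * T + j)))"
    and integrable_expected_slot_obj: "integrable (chanM D) (\<lambda>\<omega>. \<integral>h. slot_obj k (Q (k * T) \<omega>) j h \<partial>D)"
    and integral_expected_slot_obj:
      "(\<integral>\<omega>. (\<integral>h. slot_obj k (Q (k * T) \<omega>) j h \<partial>D) \<partial>chanM D)
        = (\<integral>\<omega>. slot_obj k (Q (k * T) \<omega>) j (\<omega> (k * T + j)) \<partial>chanM D)"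
proof -
  \<comment> \<open>Q (k * T) does not see the channel of slot k * T + j, so resampling that channel turns the
    realised slot objective into its conditional expectation given the frame-start queue.\<close>
  define f where "f \<omega> = slot_obj k (Q (k * T) \<omega>) j (\<omega> (k * T + j))" for \<omega>
  have "(\<lambda>\<omega>. E_dec k (Q (k * T) \<omega>) j (\<omega> (k * T + j))) \<in> borel_measurable (chanM D)"
    and "(\<lambda>\<omega>. X_dec k (Q (k * T) \<omega>) j (\<omega> (k * T + j))) \<in> borel_measurable (chanM D)"
    using j by (auto intro: measurable_E_dec measurable_X_dec)
  then have f_measurable: "f \<in> borel_measurable (chanM D)"
    unfolding f_def[abs_def] slot_obj_def by measurable
  have f_bounded: "\<bar>f \<omega>\<bar> \<le> V * (lam * B) + real (k * T) * Emax * (Emax + Eb)" if "\<omega> \<in> space (chanM D)" for \<omega>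
  proof -
    define q where "q = Q (k * T) \<omega>"
    define h where "h = \<omega> (k * T + j)"
    have "\<bar>X_dec k q j h\<bar> \<le> lam * B"
      using X_dec_bounds[of q k j h] Q_nonneg by (auto simp: q_def)
    then have "\<bar>V * X_dec k q j h\<bar> \<le> V * (lam * B)"
      using V by (simp add: abs_mult mult_left_mono)
    moreover have "\<bar>E_dec k q j h - Eb\<bar> \<le> Emax + Eb"
      using E_dec_bounds[of q j h k] Q_nonneg j that Eb by (auto simp: q_def h_def space_chanM abs_le_iff)
    then have "\<bar>q * (E_dec k q j h - Eb)\<bar> \<le> real (k * T) * Emax * (Emax + Eb)"
      unfolding abs_mult q_def using Q_le[OF that, of "k * T"] Q_nonneg[of "k * T" \<omega>] Emax_nonneg
      by (intro mult_mono) auto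
    ultimately show ?thesis
      unfolding f_def slot_obj_def q_def[symmetric] h_def[symmetric] by linarith
  qed
  have f_resampled: "f (\<omega> (k * T + j := h)) = slot_obj k (Q (k * T) \<omega>) j h" for \<omega> h
  proof -
    have "Q (k * T) (\<omega> (k * T + j := h)) = Q (k * T) \<omega>"
      by (rule Q_causal) simp
    then show ?thesis
      by (simp add: f_def)
  qed
  show "integrable (chanM D) (\<lambda>\<omega>. slot_obj k (Q (k * T) \<omega>) j (\<omega> (k * T + j)))"
    using integrable_chanM[OF f_measurable f_bounded] by (simp add: f_def)
  show "integrable (chanM D) (\<lambda>\<omega>. \<integral>h. slot_obj k (Q (k * T) \<omega>) j h \<partial>D)"
    using integrable_resample_chanM[OF D f_measurable f_bounded, of "k * T + j"] by (simp add: f_resampled)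
  show "(\<integral>\<omega>. (\<integral>h. slot_obj k (Q (k * T) \<omega>) j h \<partial>D) \<partial>chanM D)
      = (\<integral>\<omega>. slot_obj k (Q (k * T) \<omega>) j (\<omega> (k * T + j)) \<partial>chanM D)"
    using integral_resample_chanM[OF D f_measurable f_bounded, of "k * T + j"]
    by (simp only: f_resampled) (simp only: f_def)
qed

lemma
  shows integrable_frame_obj:
      "integrable (chanM D) (\<lambda>\<omega>. frame_obj T V lam B Eb D En Su (Q (k * T) \<omega>) (alg k (Q (k * T) \<omega>)))"
    and expected_drift_plus_penalty_le:
      "(\<integral>\<omega>. (Q (Suc k * T) \<omega>)\<^sup>2 / 2 \<partial>chanM D) - (\<integral>\<omega>. (Q (k * T) \<omega>)\<^sup>2 / 2 \<partial>chanM D)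
         + V * (\<Sum>j<T. \<integral>\<omega>. X (k * T + j) \<omega> \<partial>chanM D)
       \<le> real T * beta2 T Emax Eb
         + (\<integral>\<omega>. frame_obj T V lam B Eb D En Su (Q (k * T) \<omega>) (alg k (Q (k * T) \<omega>)) \<partial>chanM D)"
proof -
  interpret P: prob_space "chanM D"
    using D by (rule prob_space_chanM)
  show "integrable (chanM D) (\<lambda>\<omega>. frame_obj T V lam B Eb D En Su (Q (k * T) \<omega>) (alg k (Q (k * T) \<omega>)))"
    unfolding frame_obj_decision using integrable_expected_slot_obj by auto
  have pointwise: "(Q (Suc k * T) \<omega>)\<^sup>2 / 2 - (Q (k * T) \<omega>)\<^sup>2 / 2 + V * (\<Sum>j<T. X (k * T + j) \<omega>)
      \<le> real T * beta2 T Emax Eb + (\<Sum>j<T. slot_obj k (Q (k * T) \<omega>) j (\<omega> (k * T + j)))"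
    if "\<omega> \<in> space (chanM D)" for \<omega>
  proof -
    have "(\<Sum>j<T. slot_obj k (Q (k * T) \<omega>) j (\<omega> (k * T + j)))
        = V * (\<Sum>j<T. X (k * T + j) \<omega>) + Q (k * T) \<omega> * (\<Sum>j<T. E_dec k (Q (k * T) \<omega>) j (\<omega> (k * T + j)) - Eb)"
      by (simp add: slot_obj_def X_in_frame sum.distrib sum_distrib_left)
    then show ?thesis
      using frame_drift_le[OF that, of k] by simp
  qed
  have "(\<integral>\<omega>. (Q (Suc k * T) \<omega>)\<^sup>2 / 2 \<partial>chanM D) - (\<integral>\<omega>. (Q (k * T) \<omega>)\<^sup>2 / 2 \<partial>chanM D)
         + V * (\<Sum>j<T. \<integral>\<omega>. X (k * T + j) \<omega> \<partial>chanM D)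
      = (\<integral>\<omega>. (Q (Suc k * T) \<omega>)\<^sup>2 / 2 - (Q (k * T) \<omega>)\<^sup>2 / 2 + V * (\<Sum>j<T. X (k * T + j) \<omega>) \<partial>chanM D)"
    using Q_square_integrable X_integrable by (simp add: integral_sum)
  also have "\<dots> \<le> (\<integral>\<omega>. real T * beta2 T Emax Eb + (\<Sum>j<T. slot_obj k (Q (k * T) \<omega>) j (\<omega> (k * T + j))) \<partial>chanM D)"
  proof (rule integral_mono)
    show "integrable (chanM D) (\<lambda>\<omega>. real T * beta2 T Emax Eb + (\<Sum>j<T. slot_obj k (Q (k * T) \<omega>) j (\<omega> (k * T + j))))"
      using integrable_slot_obj by (intro Bochner_Integration.integrable_add) auto
  qed (use pointwise Q_square_integrable X_integrable in auto)
  also have "\<dots> = real T * beta2 T Emax Eb + (\<Sum>j<T. \<integral>\<omega>. slot_obj k (Q (k * T) \<omega>) j (\<omega> (k * T + j)) \<partial>chanM D)"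
    using integrable_slot_obj by (subst Bochner_Integration.integral_add) (auto simp: integral_sum P.prob_space)
  also have "\<dots> = real T * beta2 T Emax Eb
      + (\<integral>\<omega>. frame_obj T V lam B Eb D En Su (Q (k * T) \<omega>) (alg k (Q (k * T) \<omega>)) \<partial>chanM D)"
    using integrable_expected_slot_obj
    by (simp add: frame_obj_decision integral_sum integral_expected_slot_obj)
  finally show "(\<integral>\<omega>. (Q (Suc k * T) \<omega>)\<^sup>2 / 2 \<partial>chanM D) - (\<integral>\<omega>. (Q (k * T) \<omega>)\<^sup>2 / 2 \<partial>chanM D)
         + V * (\<Sum>j<T. \<integral>\<omega>. X (k * T + j) \<omega> \<partial>chanM D)
       \<le> real T * beta2 T Emax Eb
         + (\<integral>\<omega>. frame_obj T V lam B Eb D En Su (Q (k * T) \<omega>) (alg k (Q (k * T) \<omega>)) \<partial>chanM D)" .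
qed

lemma
  assumes pol: "adm_policy T Pb D En Su pol"
  shows pol_X_measurable: "pol_X T Su lam B pol t \<in> borel_measurable (chanM D)"
    and pol_E_measurable: "pol_E T En pol t \<in> borel_measurable (chanM D)"
    and pol_X_bounds: "- (lam * B) \<le> pol_X T Su lam B pol t \<omega> \<and> pol_X T Su lam B pol t \<omega> \<le> 0"
    and pol_E_bounds: "\<omega> \<in> space (chanM D) \<Longrightarrow> 0 \<le> pol_E T En pol t \<omega> \<and> pol_E T En pol t \<omega> \<le> Emax"
proof -
  have [measurable]: "fst pol (t div T) \<in> borel_measurable (chanM D)"
      "(\<lambda>\<omega>. (if pol_S T Su pol t \<omega> then 1 else 0) :: real) \<in> borel_measurable (chanM D)"
    and range: "\<forall>k \<omega>. 0 \<le> fst pol k \<omega> \<and> fst pol k \<omega> \<le> 1" "\<forall>t \<omega>. 0 \<le> snd pol t \<omega> \<and> snd pol t \<omega> \<le> Pb"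
    using pol unfolding adm_policy_def by auto
  show "pol_E T En pol t \<in> borel_measurable (chanM D)"
    using pol unfolding adm_policy_def by auto
  show "pol_X T Su lam B pol t \<in> borel_measurable (chanM D)"
    unfolding pol_X_def[abs_def] penalty_def by measurable
  show "- (lam * B) \<le> pol_X T Su lam B pol t \<omega> \<and> pol_X T Su lam B pol t \<omega> \<le> 0"
    unfolding pol_X_def using range lam B by (intro penalty_bounds) auto
  assume "\<omega> \<in> space (chanM D)"
  then show "0 \<le> pol_E T En pol t \<omega> \<and> pol_E T En pol t \<omega> \<le> Emax"
    unfolding pol_E_def using range by (intro En_bound) (auto simp: space_chanM)
qed

lemma policy_integrable:
  assumes pol: "adm_policy T Pb D En Su pol"
  shows "integrable (chanM D) (pol_X T Su lam B pol t)" "integrable (chanM D) (pol_E T En pol t)"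
proof -
  show "integrable (chanM D) (pol_X T Su lam B pol t)"
  proof (rule integrable_chanM[where c = "lam * B", OF pol_X_measurable[OF pol]])
    fix \<omega> show "\<bar>pol_X T Su lam B pol t \<omega>\<bar> \<le> lam * B"
      using pol_X_bounds[OF pol, of t \<omega>] by linarith
  qed
  show "integrable (chanM D) (pol_E T En pol t)"
    by (rule integrable_chanM[where c = Emax, OF pol_E_measurable[OF pol]]) (use pol_E_bounds[OF pol] in auto)
qed

lemma policy_frozen_slot:
  fixes k :: nat and \<omega> :: "nat \<Rightarrow> 'h"
  assumes pol: "adm_policy T Pb D En Su pol" and j: "j < T"
  defines "d \<equiv> frozen_decision T pol k \<omega>"
  shows "pol_E T En pol (k * T + j) (\<omega> (k * T + j := h)) = En (fst d) (snd d j h) h"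
    and "pol_S T Su pol (k * T + j) (\<omega> (k * T + j := h)) = Su (fst d) (snd d j h) h"
    and "pol_X T Su lam B pol (k * T + j) (\<omega> (k * T + j := h)) = penalty lam B (Su (fst d) (snd d j h) h) (fst d)"
proof -
  have "fst pol k (\<omega> (k * T + j := h)) = fst pol k \<omega>"
    using pol unfolding adm_policy_def by auto
  then have gamma: "fst pol ((k * T + j) div T) (\<omega> (k * T + j := h)) = fst d"
    using j by (simp add: d_def frozen_decision_def)
  show "pol_E T En pol (k * T + j) (\<omega> (k * T + j := h)) = En (fst d) (snd d j h) h"
    by (simp add: pol_E_def gamma) (simp add: d_def frozen_decision_def)
  show S: "pol_S T Su pol (k * T + j) (\<omega> (k * T + j := h)) = Su (fst d) (snd d j h) h"
    by (simp add: pol_S_def gamma) (simp add: d_def frozen_decision_def)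
  show "pol_X T Su lam B pol (k * T + j) (\<omega> (k * T + j := h)) = penalty lam B (Su (fst d) (snd d j h) h) (fst d)"
    by (simp add: pol_X_def S gamma)
qed

lemma frozen_decision_admissible:
  assumes pol: "adm_policy T Pb D En Su pol" and \<omega>: "\<omega> \<in> space (chanM D)"
  shows "adm_decision T Pb D En Su (frozen_decision T pol k \<omega>)"
  unfolding adm_decision_def
proof (intro conjI allI impI ballI)
  have range: "\<forall>k \<omega>. 0 \<le> fst pol k \<omega> \<and> fst pol k \<omega> \<le> 1" "\<forall>t \<omega>. 0 \<le> snd pol t \<omega> \<and> snd pol t \<omega> \<le> Pb"
    using pol unfolding adm_policy_def by auto
  then show "0 \<le> fst (frozen_decision T pol k \<omega>)" "fst (frozen_decision T pol k \<omega>) \<le> 1"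
    "\<And>j h. 0 \<le> snd (frozen_decision T pol k \<omega>) j h" "\<And>j h. snd (frozen_decision T pol k \<omega>) j h \<le> Pb"
    by (auto simp: frozen_decision_def)
  fix j assume j: "j < T"
  have "(\<lambda>h. \<omega> (k * T + j := h)) \<in> measurable D (chanM D)"
    using \<omega> unfolding chanM_def by (intro measurable_fun_upd[where J = UNIV]) (auto simp: chanM_def)
  moreover have "pol_E T En pol (k * T + j) \<in> borel_measurable (chanM D)"
      "(\<lambda>\<omega>. (if pol_S T Su pol (k * T + j) \<omega> then 1 else 0) :: real) \<in> borel_measurable (chanM D)"
    using pol unfolding adm_policy_def by auto
  ultimately have "(\<lambda>h. pol_E T En pol (k * T + j) (\<omega> (k * T + j := h))) \<in> borel_measurable D"
      "(\<lambda>h. (if pol_S T Su pol (k * T + j) (\<omega> (k * T + j := h)) then 1 else 0) :: real) \<in> borel_measurable D"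
    by (auto intro: measurable_compose)
  then show "(\<lambda>h. En (fst (frozen_decision T pol k \<omega>)) (snd (frozen_decision T pol k \<omega>) j h) h) \<in> borel_measurable D"
      "(\<lambda>h. (if Su (fst (frozen_decision T pol k \<omega>)) (snd (frozen_decision T pol k \<omega>) j h) h then 1 else 0) :: real)
        \<in> borel_measurable D"
    by (simp_all add: policy_frozen_slot[OF pol j])
qed

definition pol_slot_obj :: "'h policy \<Rightarrow> real \<Rightarrow> nat \<Rightarrow> (nat \<Rightarrow> 'h) \<Rightarrow> real" where
  "pol_slot_obj pol q t \<omega> = V * pol_X T Su lam B pol t \<omega> + q * (pol_E T En pol t \<omega> - Eb)"

lemma
  assumes pol: "adm_policy T Pb D En Su pol"
  shows measurable_pol_slot_obj: "pol_slot_obj pol q t \<in> borel_measurable (chanM D)"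
    and pol_slot_obj_bounded: "0 \<le> q \<Longrightarrow> \<omega> \<in> space (chanM D) \<Longrightarrow>
      \<bar>pol_slot_obj pol q t \<omega>\<bar> \<le> V * (lam * B) + q * (Emax + Eb)"
proof -
  show "pol_slot_obj pol q t \<in> borel_measurable (chanM D)"
    using pol_X_measurable[OF pol] pol_E_measurable[OF pol] unfolding pol_slot_obj_def[abs_def] by measurable
  assume q: "0 \<le> q" and \<omega>: "\<omega> \<in> space (chanM D)"
  have "\<bar>pol_X T Su lam B pol t \<omega>\<bar> \<le> lam * B"
    using pol_X_bounds[OF pol, of t \<omega>] by linarith
  then have "\<bar>V * pol_X T Su lam B pol t \<omega>\<bar> \<le> V * (lam * B)"
    using V by (simp add: abs_mult mult_left_mono)
  moreover have "\<bar>pol_E T En pol t \<omega> - Eb\<bar> \<le> Emax + Eb"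
    using pol_E_bounds[OF pol \<omega>, of t] Eb by (simp add: abs_le_iff)
  then have "\<bar>q * (pol_E T En pol t \<omega> - Eb)\<bar> \<le> q * (Emax + Eb)"
    using q by (simp add: abs_mult mult_left_mono)
  ultimately show "\<bar>pol_slot_obj pol q t \<omega>\<bar> \<le> V * (lam * B) + q * (Emax + Eb)"
    unfolding pol_slot_obj_def by linarith
qed

lemma frame_obj_frozen_decision:
  assumes "adm_policy T Pb D En Su pol"
  shows "frame_obj T V lam B Eb D En Su q (frozen_decision T pol k \<omega>)
    = (\<Sum>j<T. \<integral>h. pol_slot_obj pol q (k * T + j) (\<omega> (k * T + j := h)) \<partial>D)"
  unfolding frame_obj_def pol_slot_obj_def
  by (intro sum.cong refl integral_cong) (simp_all add: policy_frozen_slot[OF assms])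

lemma frame_obj_le_policy:
  assumes pol: "adm_policy T Pb D En Su pol" and q: "0 \<le> q"
  shows "frame_obj T V lam B Eb D En Su q (alg k q)
    \<le> V * (\<Sum>j<T. \<integral>\<omega>. pol_X T Su lam B pol (k' * T + j) \<omega> \<partial>chanM D)
      + q * ((\<Sum>j<T. \<integral>\<omega>. pol_E T En pol (k' * T + j) \<omega> \<partial>chanM D) - real T * Eb)"
proof -
  interpret P: prob_space "chanM D"
    using D by (rule prob_space_chanM)
  note resample = integrable_resample_chanM[OF D measurable_pol_slot_obj[OF pol] pol_slot_obj_bounded[OF pol q]]
    integral_resample_chanM[OF D measurable_pol_slot_obj[OF pol] pol_slot_obj_bounded[OF pol q]]
  have pointwise: "frame_obj T V lam B Eb D En Su q (alg k q)
      \<le> (\<Sum>j<T. \<integral>h. pol_slot_obj pol q (k' * T + j) (\<omega> (k' * T + j := h)) \<partial>D)"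
    if "\<omega> \<in> space (chanM D)" for \<omega>
    using decision_minimal[OF q frozen_decision_admissible[OF pol that]] by (simp add: frame_obj_frozen_decision[OF pol])
  have "frame_obj T V lam B Eb D En Su q (alg k q) = (\<integral>\<omega>. frame_obj T V lam B Eb D En Su q (alg k q) \<partial>chanM D)"
    by (simp add: P.prob_space)
  also have "\<dots> \<le> (\<integral>\<omega>. (\<Sum>j<T. \<integral>h. pol_slot_obj pol q (k' * T + j) (\<omega> (k' * T + j := h)) \<partial>D) \<partial>chanM D)"
    using pointwise resample(1) by (intro integral_mono) auto
  also have "\<dots> = (\<Sum>j<T. \<integral>\<omega>. pol_slot_obj pol q (k' * T + j) \<omega> \<partial>chanM D)"
    using resample by (simp add: integral_sum)
  also have "\<dots> = V * (\<Sum>j<T. \<integral>\<omega>. pol_X T Su lam B pol (k' * T + j) \<omega> \<partial>chanM D)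
      + q * ((\<Sum>j<T. \<integral>\<omega>. pol_E T En pol (k' * T + j) \<omega> \<partial>chanM D) - real T * Eb)"
    using policy_integrable[OF pol]
    by (simp add: pol_slot_obj_def P.prob_space sum.distrib sum_distrib_left sum_subtractf algebra_simps)
  finally show ?thesis .
qed

lemma expected_X_ge: "- (lam * B) \<le> (\<integral>\<omega>. X t \<omega> \<partial>chanM D)"
proof -
  interpret P: prob_space "chanM D"
    using D by (rule prob_space_chanM)
  have "(\<integral>\<omega>. - (lam * B) \<partial>chanM D) \<le> (\<integral>\<omega>. X t \<omega> \<partial>chanM D)"
    using X_integrable X_bounds by (intro integral_mono) auto
  then show ?thesis
    by (simp add: P.prob_space)
qed

lemma expected_pol_X_nonpos: "adm_policy T Pb D En Su pol \<Longrightarrow> (\<integral>\<omega>. pol_X T Su lam B pol t \<omega> \<partial>chanM D) \<le> 0"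
proof -
  assume pol: "adm_policy T Pb D En Su pol"
  have "0 \<le> (\<integral>\<omega>. - pol_X T Su lam B pol t \<omega> \<partial>chanM D)"
    using pol_X_bounds[OF pol] by (intro Bochner_Integration.integral_nonneg) auto
  then show ?thesis
    by simp
qed

lemma frame_obj_le_slater:
  assumes pol: "adm_policy T Pb D En Su pol" and q: "0 \<le> q"
    and slater: "1 / real T * (\<Sum>t\<in>{k * T..<Suc k * T}. \<integral>\<omega>. pol_E T En pol t \<omega> \<partial>chanM D) < Eb - \<delta>"
  shows "frame_obj T V lam B Eb D En Su q (alg k q) \<le> - (q * real T * \<delta>)"
proof -
  have "(\<Sum>j<T. \<integral>\<omega>. pol_E T En pol (k * T + j) \<omega> \<partial>chanM D) - real T * Eb \<le> - (real T * \<delta>)"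
    using slater T unfolding sum_frame by (simp add: field_simps)
  then have "q * ((\<Sum>j<T. \<integral>\<omega>. pol_E T En pol (k * T + j) \<omega> \<partial>chanM D) - real T * Eb) \<le> - (q * real T * \<delta>)"
    using q mult_left_mono by fastforce
  moreover have "V * (\<Sum>j<T. \<integral>\<omega>. pol_X T Su lam B pol (k * T + j) \<omega> \<partial>chanM D) \<le> 0"
    using V expected_pol_X_nonpos[OF pol] by (intro mult_nonneg_nonpos sum_nonpos) auto
  ultimately show ?thesis
    using frame_obj_le_policy[OF pol q, of k k] by linarith
qed

lemma frame_obj_le_average:
  assumes pol: "adm_policy T Pb D En Su pol" and q: "0 \<le> q" and K: "1 \<le> K"
  shows "frame_obj T V lam B Eb D En Su q (alg k q) / real T
    \<le> V * avg_X T D Su lam B pol K + q * (avg_E T D En pol K - Eb)"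
proof -
  define c where "c = frame_obj T V lam B Eb D En Su q (alg k q)"
  define x where "x t = (\<integral>\<omega>. pol_X T Su lam B pol t \<omega> \<partial>chanM D)" for t
  define e where "e t = (\<integral>\<omega>. pol_E T En pol t \<omega> \<partial>chanM D)" for t
  have "real K * c \<le> (\<Sum>k'<K. V * (\<Sum>j<T. x (k' * T + j)) + q * ((\<Sum>j<T. e (k' * T + j)) - real T * Eb))"
    using sum_mono[of "{..<K}", OF frame_obj_le_policy[OF pol q, of k]] by (simp add: c_def x_def e_def)
  also have "\<dots> = V * (\<Sum>k'<K. \<Sum>j<T. x (k' * T + j)) + q * ((\<Sum>k'<K. \<Sum>j<T. e (k' * T + j)) - real K * real T * Eb)"
    by (simp add: sum.distrib sum_distrib_left sum_subtractf algebra_simps)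
  also have "\<dots> = V * (\<Sum>t<K * T. x t) + q * ((\<Sum>t<K * T. e t) - real K * real T * Eb)"
    by (simp only: sum_frames)
  finally have main: "real K * c \<le> V * (\<Sum>t<K * T. x t) + q * ((\<Sum>t<K * T. e t) - real K * real T * Eb)" .
  have KT: "0 < real K * real T" and "real K \<noteq> 0" "real T \<noteq> 0"
    using K T by simp_all
  have "c / real T = real K * c / (real K * real T)"
    using K by simp
  also have "\<dots> \<le> (V * (\<Sum>t<K * T. x t) + q * ((\<Sum>t<K * T. e t) - real K * real T * Eb)) / (real K * real T)"
    using main KT by (intro divide_right_mono) auto
  also have "\<dots> = V * avg_X T D Su lam B pol K + q * (avg_E T D En pol K - Eb)"
    unfolding avg_X_def avg_E_def x_def[symmetric] e_def[symmetric]
    using \<open>real K \<noteq> 0\<close> \<open>real T \<noteq> 0\<close> by (simp add: field_simps)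
  finally show ?thesis
    unfolding c_def .
qed

lemma frame_obj_le_limsup:
  assumes pol: "feasible_policy T Pb D En Su Eb pol" and q: "0 \<le> q"
  shows "ereal (frame_obj T V lam B Eb D En Su q (alg k q) / (real T * V))
    \<le> limsup (\<lambda>K. ereal (avg_X T D Su lam B pol K))"
proof (rule ereal_le_real)
  fix z assume z: "limsup (\<lambda>K. ereal (avg_X T D Su lam B pol K)) \<le> ereal z"
  define c where "c = frame_obj T V lam B Eb D En Su q (alg k q)"
  have adm: "adm_policy T Pb D En Su pol"
    and energy: "limsup (\<lambda>K. ereal (avg_E T D En pol K)) \<le> ereal Eb"
    using pol unfolding feasible_policy_def by auto
  have approx: "c / real T \<le> V * z + (V + q) * e" if e: "0 < e" for e
  proof -
    have "limsup (\<lambda>K. ereal (avg_X T D Su lam B pol K)) < ereal (z + e)"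
      using z e by (simp add: le_less_trans)
    then have "eventually (\<lambda>K. ereal (avg_X T D Su lam B pol K) < ereal (z + e)) sequentially"
      by (rule Limsup_lessD)
    moreover have "limsup (\<lambda>K. ereal (avg_E T D En pol K)) < ereal (Eb + e)"
      using energy e by (simp add: le_less_trans)
    then have "eventually (\<lambda>K. ereal (avg_E T D En pol K) < ereal (Eb + e)) sequentially"
      by (rule Limsup_lessD)
    ultimately have "eventually (\<lambda>K. avg_X T D Su lam B pol K < z + e \<and> avg_E T D En pol K < Eb + e \<and> 1 \<le> K)
        sequentially"
      using eventually_ge_at_top[of "1 :: nat"] by eventually_elim simp
    then obtain K where K: "avg_X T D Su lam B pol K < z + e" "avg_E T D En pol K < Eb + e" "1 \<le> K"
      unfolding eventually_sequentially by blast
    have "c / real T \<le> V * avg_X T D Su lam B pol K + q * (avg_E T D En pol K - Eb)"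
      unfolding c_def by (rule frame_obj_le_average[OF adm q K(3)])
    also have "\<dots> \<le> V * (z + e) + q * e"
      using K V q by (intro add_mono mult_left_mono) auto
    finally show ?thesis
      by (simp add: algebra_simps)
  qed
  have "c / real T \<le> V * z"
  proof (rule field_le_epsilon)
    fix e :: real assume "0 < e"
    then show "c / real T \<le> V * z + e"
      using approx[of "e / (V + q)"] V q by simp
  qed
  then have "c \<le> z * (real T * V)"
    using T by (simp add: pos_divide_le_eq algebra_simps)
  then show "ereal (frame_obj T V lam B Eb D En Su q (alg k q) / (real T * V)) \<le> ereal z"
    using T V by (simp add: c_def pos_divide_le_eq)
qed


lemma frame_obj_le_X_opt:
  assumes feasible: "\<exists>pol. feasible_policy T Pb D En Su Eb pol" and q: "0 \<le> q"
  shows "frame_obj T V lam B Eb D En Su q (alg k q) \<le> real T * V * X_opt T Pb D En Su Eb lam B"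
proof -
  define c where "c = frame_obj T V lam B Eb D En Su q (alg k q)"
  define I where "I = (INF pol \<in> {pol. feasible_policy T Pb D En Su Eb pol}. limsup (\<lambda>K. ereal (avg_X T D Su lam B pol K)))"
  have lower: "ereal (c / (real T * V)) \<le> I"
    unfolding I_def c_def using frame_obj_le_limsup[OF _ q] by (auto intro: INF_greatest)
  obtain pol where pol: "feasible_policy T Pb D En Su Eb pol"
    using feasible by blast
  have "avg_X T D Su lam B pol K \<le> 0" for K
    using pol expected_pol_X_nonpos unfolding feasible_policy_def avg_X_def
    by (intro mult_nonneg_nonpos sum_nonpos) auto
  then have "limsup (\<lambda>K. ereal (avg_X T D Su lam B pol K)) \<le> ereal 0"
    by (intro Limsup_bounded always_eventually) auto
  moreover have "I \<le> limsup (\<lambda>K. ereal (avg_X T D Su lam B pol K))"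
    unfolding I_def using pol by (auto intro: INF_lower)
  ultimately have "I \<le> ereal 0"
    by simp
  with lower have "c / (real T * V) \<le> real_of_ereal I"
    by (cases I) auto
  then show ?thesis
    using T V by (simp add: X_opt_def I_def c_def pos_divide_le_eq mult.commute)
qed


lemma expected_queue_sum_le:
  assumes pol: "adm_policy T Pb D En Su pol" and \<delta>: "0 < \<delta>"
    and slater: "\<forall>k. 1 / real T * (\<Sum>t\<in>{k * T..<Suc k * T}. \<integral>\<omega>. pol_E T En pol t \<omega> \<partial>chanM D) < Eb - \<delta>"
  shows "(\<Sum>k<K. \<integral>\<omega>. Q (k * T) \<omega> \<partial>chanM D) \<le> real K * ((beta2 T Emax Eb + V * (lam * B)) / \<delta>)"
proof -
  define L where "L k = (\<integral>\<omega>. (Q (k * T) \<omega>)\<^sup>2 / 2 \<partial>chanM D)" for k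
  define m where "m k = (\<integral>\<omega>. Q (k * T) \<omega> \<partial>chanM D)" for k
  have "L (Suc k) - L k + real T * \<delta> * m k \<le> real T * (beta2 T Emax Eb + V * (lam * B))" for k
  proof -
    have "(\<integral>\<omega>. frame_obj T V lam B Eb D En Su (Q (k * T) \<omega>) (alg k (Q (k * T) \<omega>)) \<partial>chanM D)
        \<le> (\<integral>\<omega>. - (Q (k * T) \<omega> * real T * \<delta>) \<partial>chanM D)"
      using integrable_frame_obj Q_integrable frame_obj_le_slater[OF pol Q_nonneg slater[rule_format, of k]]
      by (intro integral_mono) auto
    moreover have "- (real T * (lam * B)) \<le> (\<Sum>j<T. \<integral>\<omega>. X (k * T + j) \<omega> \<partial>chanM D)"
      using sum_mono[of "{..<T}" "\<lambda>_. - (lam * B)", OF expected_X_ge] by simp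
    then have "V * (- (real T * (lam * B))) \<le> V * (\<Sum>j<T. \<integral>\<omega>. X (k * T + j) \<omega> \<partial>chanM D)"
      using V by (intro mult_left_mono) auto
    ultimately show ?thesis
      using expected_drift_plus_penalty_le[of k] by (simp add: L_def m_def algebra_simps)
  qed
  then have "(\<Sum>k<K. real T * \<delta> * m k) \<le> real K * (real T * (beta2 T Emax Eb + V * (lam * B)))"
    by (rule sum_le_of_drift_le) (simp_all add: L_def)
  then have "real T * (\<delta> * (\<Sum>k<K. m k)) \<le> real T * (real K * (beta2 T Emax Eb + V * (lam * B)))"
    by (simp add: sum_distrib_left algebra_simps)
  then have "\<delta> * (\<Sum>k<K. m k) \<le> real K * (beta2 T Emax Eb + V * (lam * B))"
    using T by simp
  then show ?thesis
    using \<delta> by (simp add: m_def pos_le_divide_eq mult.commute)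
qed

lemma expected_penalty_sum_le:
  assumes feasible: "\<exists>pol. feasible_policy T Pb D En Su Eb pol"
  shows "(\<Sum>k<K. \<Sum>t\<in>{k * T..<Suc k * T}. \<integral>\<omega>. X t \<omega> \<partial>chanM D)
    \<le> real K * real T * (beta2 T Emax Eb / V + X_opt T Pb D En Su Eb lam B)"
proof -
  define L where "L k = (\<integral>\<omega>. (Q (k * T) \<omega>)\<^sup>2 / 2 \<partial>chanM D)" for k
  define x where "x k = (\<Sum>j<T. \<integral>\<omega>. X (k * T + j) \<omega> \<partial>chanM D)" for k
  have "L (Suc k) - L k + V * x k \<le> real T * beta2 T Emax Eb + real T * V * X_opt T Pb D En Su Eb lam B" for k
  proof -
    interpret P: prob_space "chanM D"
      using D by (rule prob_space_chanM)
    have "(\<integral>\<omega>. frame_obj T V lam B Eb D En Su (Q (k * T) \<omega>) (alg k (Q (k * T) \<omega>)) \<partial>chanM D)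
        \<le> (\<integral>\<omega>. real T * V * X_opt T Pb D En Su Eb lam B \<partial>chanM D)"
      using integrable_frame_obj frame_obj_le_X_opt[OF feasible Q_nonneg]
      by (intro integral_mono) auto
    then show ?thesis
      using expected_drift_plus_penalty_le[of k] by (simp add: L_def x_def P.prob_space)
  qed
  then have "(\<Sum>k<K. V * x k) \<le> real K * (real T * beta2 T Emax Eb + real T * V * X_opt T Pb D En Su Eb lam B)"
    by (rule sum_le_of_drift_le) (simp_all add: L_def)
  moreover have "(\<Sum>k<K. V * x k) = V * (\<Sum>k<K. x k)"
    by (simp add: sum_distrib_left)
  moreover have "real K * (real T * beta2 T Emax Eb + real T * V * X_opt T Pb D En Su Eb lam B)
      = V * (real K * real T * (beta2 T Emax Eb / V + X_opt T Pb D En Su Eb lam B))"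
    using V by (simp add: field_simps)
  ultimately have "(\<Sum>k<K. x k) \<le> real K * real T * (beta2 T Emax Eb / V + X_opt T Pb D En Su Eb lam B)"
    using V by simp
  then show ?thesis
    unfolding sum_frame x_def .
qed

end

lemma limsup_device_average_le:
  fixes a :: "nat \<Rightarrow> nat \<Rightarrow> real" and b :: "nat \<Rightarrow> real"
  assumes c: "0 < c" and N: "1 \<le> N"
    and bound: "\<And>n K. n < N \<Longrightarrow> (\<Sum>k<K. a n k) \<le> real K * c * b n"
  shows "limsup (\<lambda>K. ereal (1 / (real K * c * real N) * (\<Sum>k<K. \<Sum>n<N. a n k)))
    \<le> ereal ((\<Sum>n<N. b n) / real N)"
proof (rule Limsup_bounded)
  show "eventually (\<lambda>K. ereal (1 / (real K * c * real N) * (\<Sum>k<K. \<Sum>n<N. a n k))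
      \<le> ereal ((\<Sum>n<N. b n) / real N)) sequentially"
    using eventually_ge_at_top[of "1 :: nat"]
  proof eventually_elim
    case (elim K)
    have pos: "0 < real K * c * real N" and nonzero: "real K \<noteq> 0" "c \<noteq> 0" "real N \<noteq> 0"
      using elim c N by simp_all
    have "(\<Sum>k<K. \<Sum>n<N. a n k) = (\<Sum>n<N. \<Sum>k<K. a n k)"
      by (rule sum.swap)
    also have "\<dots> \<le> (\<Sum>n<N. real K * c * b n)"
      by (rule sum_mono) (simp add: bound)
    finally have "1 / (real K * c * real N) * (\<Sum>k<K. \<Sum>n<N. a n k)
        \<le> 1 / (real K * c * real N) * (real K * c * (\<Sum>n<N. b n))"
      using pos by (intro mult_left_mono) (auto simp: sum_distrib_left)
    also have "\<dots> = (\<Sum>n<N. b n) / real N"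
      using nonzero by (simp add: field_simps)
    finally show ?case
      by simp
  qed
qed

theorem theorem3:
  fixes N T :: nat and V lam \<delta> :: real
    and D :: "nat \<Rightarrow> 'h measure"
    and En :: "nat \<Rightarrow> real \<Rightarrow> real \<Rightarrow> 'h \<Rightarrow> real"
    and Su :: "nat \<Rightarrow> real \<Rightarrow> real \<Rightarrow> 'h \<Rightarrow> bool"
    and B Pb Emax Eb :: "nat \<Rightarrow> real"
    and alg :: "nat \<Rightarrow> nat \<Rightarrow> real \<Rightarrow> 'h decision"
  assumes N: "N \<ge> 1" and T: "T \<ge> 1" and V: "V > 0" and lam: "lam > 0" and \<delta>: "\<delta> > 0"
    and D: "\<And>n. n < N \<Longrightarrow> prob_space (D n)"
    and B: "\<And>n. n < N \<Longrightarrow> B n > 0"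
    and Pb: "\<And>n. n < N \<Longrightarrow> Pb n \<ge> 0"
    and En_bound: "\<And>n g p h. n < N \<Longrightarrow> 0 \<le> g \<Longrightarrow> g \<le> 1 \<Longrightarrow> 0 \<le> p \<Longrightarrow> p \<le> Pb n \<Longrightarrow>
                     h \<in> space (D n) \<Longrightarrow> 0 \<le> En n g p h \<and> En n g p h \<le> Emax n"
    and Eb: "\<And>n. n < N \<Longrightarrow> Eb n \<ge> 0"
    and alg: "\<And>n. n < N \<Longrightarrow> is_dpp_alg T (Pb n) V lam (B n) (Eb n) (D n) (En n) (Su n) (alg n)"
    and alg_meas: "\<And>n. n < N \<Longrightarrow> alg_measurable T (D n) (En n) (Su n) (alg n)"
    and slater: "\<And>n. n < N \<Longrightarrow> \<exists>pol. feasible_policy T (Pb n) (D n) (En n) (Su n) (Eb n) pol \<and>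
                   (\<forall>k. 1 / real T * (\<Sum>t\<in>{k * T..<Suc k * T}. \<integral>\<omega>. pol_E T (En n) pol t \<omega> \<partial>chanM (D n))
                          < Eb n - \<delta>)"
  shows "(limsup (\<lambda>K. ereal (1 / (real K * real N) *
            (\<Sum>k<K. \<Sum>n<N. \<integral>\<omega>. alg_Q T (Eb n) (En n) (alg n) (k * T) \<omega> \<partial>chanM (D n))))
         \<le> ereal (((\<Sum>n<N. beta2 T (Emax n) (Eb n)) / real N + V * ((\<Sum>n<N. lam * B n) / real N)) / \<delta>)) \<and>
         (limsup (\<lambda>K. ereal (1 / (real K * real T * real N) *
            (\<Sum>k<K. \<Sum>n<N. \<Sum>t\<in>{k * T..<Suc k * T}.
                \<integral>\<omega>. alg_X T (Eb n) (En n) (Su n) lam (B n) (alg n) t \<omega> \<partial>chanM (D n))))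
         \<le> ereal ((\<Sum>n<N. beta2 T (Emax n) (Eb n)) / real N / V
                  + (\<Sum>n<N. X_opt T (Pb n) (D n) (En n) (Su n) (Eb n) lam (B n)) / real N))"
proof -
  have device: "dpp_device T V lam (D n) (En n) (Su n) (B n) (Pb n) (Emax n) (Eb n) (alg n)" if "n < N" for n
    using T V lam D[OF that] B[OF that] Pb[OF that] En_bound[OF that] Eb[OF that] alg[OF that] alg_meas[OF that]
    by (rule dpp_device.intro)
  have queue: "(\<Sum>k<K. \<integral>\<omega>. alg_Q T (Eb n) (En n) (alg n) (k * T) \<omega> \<partial>chanM (D n))
      \<le> real K * ((beta2 T (Emax n) (Eb n) + V * (lam * B n)) / \<delta>)" if "n < N" for n K
    using slater[OF that] dpp_device.expected_queue_sum_le[OF device[OF that] _ \<delta>]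
    unfolding feasible_policy_def by blast
  have penalty: "(\<Sum>k<K. \<Sum>t\<in>{k * T..<Suc k * T}. \<integral>\<omega>. alg_X T (Eb n) (En n) (Su n) lam (B n) (alg n) t \<omega> \<partial>chanM (D n))
      \<le> real K * real T * (beta2 T (Emax n) (Eb n) / V + X_opt T (Pb n) (D n) (En n) (Su n) (Eb n) lam (B n))"
    if "n < N" for n K
    using slater[OF that] dpp_device.expected_penalty_sum_le[OF device[OF that]] by blast
  have "limsup (\<lambda>K. ereal (1 / (real K * real N) *
            (\<Sum>k<K. \<Sum>n<N. \<integral>\<omega>. alg_Q T (Eb n) (En n) (alg n) (k * T) \<omega> \<partial>chanM (D n))))
      \<le> ereal ((\<Sum>n<N. (beta2 T (Emax n) (Eb n) + V * (lam * B n)) / \<delta>) / real N)"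
    by (rule limsup_device_average_le[where c = 1, unfolded mult_1_right]) (use N queue in auto)
  moreover have "limsup (\<lambda>K. ereal (1 / (real K * real T * real N) *
            (\<Sum>k<K. \<Sum>n<N. \<Sum>t\<in>{k * T..<Suc k * T}.
                \<integral>\<omega>. alg_X T (Eb n) (En n) (Su n) lam (B n) (alg n) t \<omega> \<partial>chanM (D n))))
      \<le> ereal ((\<Sum>n<N. beta2 T (Emax n) (Eb n) / V + X_opt T (Pb n) (D n) (En n) (Su n) (Eb n) lam (B n)) / real N)"
    by (rule limsup_device_average_le) (use N T penalty in auto)
  moreover have "(\<Sum>n<N. (beta2 T (Emax n) (Eb n) + V * (lam * B n)) / \<delta>) / real N
      = ((\<Sum>n<N. beta2 T (Emax n) (Eb n)) / real N + V * ((\<Sum>n<N. lam * B n) / real N)) / \<delta>"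
    and "(\<Sum>n<N. beta2 T (Emax n) (Eb n) / V + X_opt T (Pb n) (D n) (En n) (Su n) (Eb n) lam (B n)) / real N
      = (\<Sum>n<N. beta2 T (Emax n) (Eb n)) / real N / V
        + (\<Sum>n<N. X_opt T (Pb n) (D n) (En n) (Su n) (Eb n) lam (B n)) / real N"
    by (simp_all add: sum.distrib sum_divide_distrib[symmetric] sum_distrib_left[symmetric] add_divide_distrib mult.commute)
  ultimately show ?thesis
    by (simp only:)
qed

end
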